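(* Let $r,\theta$ be real numbers with $1\le\theta\le 0.5r\le 3\theta$, and let $q(x)=1-(r-\theta)x+(r-2\theta)x^2+\theta x^3$. Then $q$ has a real root $\alpha<-1$, and if $\beta,\gamma$ denote the remaining two (complex) roots of $q$, then $\beta\gamma$ is real and $0<\beta\gamma<1$.
   Context: Note $q(x)=1+rx(x-1)+\theta x(x-1)^2$ and $q(x)=(1-x/\alpha)(1-x/\beta)(1-x/\gamma)$ where $\alpha,\beta,\gamma$ are the roots of $q$ (counted with multiplicity). *)

theory Defs
  imports "HOL-Analysis.Analysis" "HOL-Computational_Algebra.Polynomial"
begin

definition qpoly :: "real \<Rightarrow> real \<Rightarrow> real poly" where
  "qpoly r \<theta> = [:1, -(r - \<theta>), r - 2*\<theta>, \<theta>:]"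

end

theory Submission
  imports Defs
begin

text \<open>Since \<open>q(-1) = 1 + 2r - 4\<theta> > 0\<close> and \<open>q(-6) \<le> 1 - 42\<theta> < 0\<close>, the intermediate value
  theorem gives a real root \<open>\<alpha> < -1\<close>. Comparing constant coefficients in
  \<open>q(x) = \<theta>(x - \<alpha>)(x - \<beta>)(x - \<gamma>)\<close> gives \<open>\<beta>\<gamma> = 1/(-\<theta>\<alpha>)\<close>, and \<open>-\<theta>\<alpha> > 1\<close>.\<close>

lemma qpoly_root_below_minus_one:
  assumes "1 \<le> \<theta>" and "\<theta> \<le> r / 2" and "r / 2 \<le> 3 * \<theta>"
  obtains \<alpha> where "-6 < \<alpha>" "\<alpha> < -1" "poly (qpoly r \<theta>) \<alpha> = 0"
proof -
  have "poly (qpoly r \<theta>) (-6) < 0" and "0 < poly (qpoly r \<theta>) (-1)"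
    using assms by (simp_all add: qpoly_def algebra_simps)
  then show ?thesis
    using poly_IVT_pos[of "-6" "-1"] that by auto
qed

lemma coeff_0_smult_cubic_factors:
  fixes c a b g :: "'a::comm_ring_1"
  shows "coeff (smult c ([:-a, 1:] * [:-b, 1:] * [:-g, 1:])) 0 = - (c * a * b * g)"
  by (simp add: coeff_mult_0 algebra_simps)

lemma inverse_of_real_gt_one:
  fixes z :: complex and t :: real
  assumes "complex_of_real t * z = 1" and "1 < t"
  shows "z \<in> \<real> \<and> 0 < Re z \<and> Re z < 1"
proof -
  have "z = complex_of_real (1 / t)"
    using assms by (simp add: field_simps)
  then show ?thesis
    using assms(2) by simp
qed

theorem mainTheorem6:
  fixes r \<theta> :: real
  assumes "1 \<le> \<theta>" and "\<theta> \<le> r / 2" and "r / 2 \<le> 3 * \<theta>"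
  shows "\<exists>\<alpha>::real. \<alpha> < -1 \<and> poly (qpoly r \<theta>) \<alpha> = 0 \<and>
           (\<forall>\<beta> \<gamma> :: complex.
              map_poly complex_of_real (qpoly r \<theta>)
                = smult (complex_of_real \<theta>)
                    ([:- complex_of_real \<alpha>, 1:] * [:- \<beta>, 1:] * [:- \<gamma>, 1:])
              \<longrightarrow> \<beta> * \<gamma> \<in> \<real> \<and> 0 < Re (\<beta> * \<gamma>) \<and> Re (\<beta> * \<gamma>) < 1)"
proof -
  obtain \<alpha> where root: "\<alpha> < -1" "poly (qpoly r \<theta>) \<alpha> = 0"
    using qpoly_root_below_minus_one[OF assms] by metis
  have "1 * 1 < \<theta> * (-\<alpha>)"
    using assms(1) root(1) by (intro mult_le_less_imp_less) auto
  then have theta_alpha: "1 < - \<theta> * \<alpha>" by simp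
  show ?thesis
  proof (intro exI[of _ \<alpha>] conjI allI impI root)
    fix \<beta> \<gamma> :: complex
    assume factored: "map_poly complex_of_real (qpoly r \<theta>)
                = smult (complex_of_real \<theta>)
                    ([:- complex_of_real \<alpha>, 1:] * [:- \<beta>, 1:] * [:- \<gamma>, 1:])"
    have "1 = - (complex_of_real \<theta> * complex_of_real \<alpha> * \<beta> * \<gamma>)"
      using arg_cong[OF factored, of "\<lambda>p. coeff p 0"]
      by (simp only: coeff_0_smult_cubic_factors) (simp add: qpoly_def coeff_map_poly)
    then have "complex_of_real (- \<theta> * \<alpha>) * (\<beta> * \<gamma>) = 1"
      by (simp add: algebra_simps)
    then show "\<beta> * \<gamma> \<in> \<real>" "0 < Re (\<beta> * \<gamma>)" "Re (\<beta> * \<gamma>) < 1"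
      using inverse_of_real_gt_one theta_alpha by blast+
  qed
qed

end
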